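(* Let $\langle N,P,c,b,\mathcal{A}\rangle$ be a PB instance satisfying the High Cardinality Budget Property ($l_o>h_{\mathcal{A}}$), and let $S$ be the output of the minimax-disutility version of Ordered-Relax on it. Then $ALG\le\left(2-\frac{1}{h_o}\right)OPT$, where $ALG=\max_{i\in N}(b-u_i(S))$ and $OPT=\min_{T\subseteq P,\,c(T)\le b}\max_{i\in N}(b-u_i(T))$.
   Context: A PB instance is $\langle N,P,c,b,\mathcal{A}\rangle$ with voters $N=\{1,\dots,n\}$, projects $P=\{p_1,\dots,p_m\}$, costs $c:P\to\mathbb{N}$, budget $b\in\mathbb{N}$, and approval sets $A_i\subseteq P$. $c(S)=\sum_{p\in S}c(p)$; $S$ is feasible if $c(S)\le b$; $u_i(S)=c(S\cap A_i)$; the disutility of voter $i$ from $S$ is $b-u_i(S)$. The ordered-fill algorithm with respect to a complete order $\succ$ on $P$ adds projects from highest- to lowest-ranked, stopping as soon as the next project does not fit within the budget. $l_o$ and $h_o$ denote the minimum and maximum cardinality of the outputs of ordered-fill algorithms over all complete orders on $P$; $h_{\mathcal{A}}=\max_{i\in N}|A_i|$. The instance satisfies the High Cardinality Budget Property if $l_o>h_{\mathcal{A}}$. The minimax-disutility Ordered-Relax algorithm: compute an optimal solution $(q^*,x^* )$ of the LP: minimize $q$ subject to $q\ge b-\sum_{p\in A_i}c(p)x_p$ for all $i\in N$, $\sum_{p\in P}c(p)x_p\le b$, $0\le x_p\le1$ for all $p$, $q\ge0$; then order projects in non-increasing order of $c(p)x^*_p$ (ties arbitrary), and starting from $S=\emptyset$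 add projects in this order, stopping as soon as the next project does not fit within the budget; output $S$. *)

theory Defs
  imports Complex_Main
begin

fun ordered_fill :: "('p \<Rightarrow> nat) \<Rightarrow> nat \<Rightarrow> 'p list \<Rightarrow> 'p list" where
  "ordered_fill c r [] = []"
| "ordered_fill c r (p # ps) =
     (if c p \<le> r then p # ordered_fill c (r - c p) ps else [])"

(* complete orders on P, represented as lists ranking P from highest to lowest *)
definition orders_of :: "'p set \<Rightarrow> 'p list set" where
  "orders_of P = {xs. distinct xs \<and> set xs = P}"

definition fill_cards :: "'p set \<Rightarrow> ('p \<Rightarrow> nat) \<Rightarrow> nat \<Rightarrow> nat set" where
  "fill_cards P c b = (\<lambda>xs. card (set (ordered_fill c b xs))) ` orders_of P"

definition l_o :: "'p set \<Rightarrow> ('p \<Rightarrow> nat) \<Rightarrow> nat \<Rightarrow> nat" where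
  "l_o P c b = Min (fill_cards P c b)"

definition h_o :: "'p set \<Rightarrow> ('p \<Rightarrow> nat) \<Rightarrow> nat \<Rightarrow> nat" where
  "h_o P c b = Max (fill_cards P c b)"

definition h_A :: "'v set \<Rightarrow> ('v \<Rightarrow> 'p set) \<Rightarrow> nat" where
  "h_A N A = Max ((\<lambda>i. card (A i)) ` N)"

definition cost :: "('p \<Rightarrow> nat) \<Rightarrow> 'p set \<Rightarrow> nat" where
  "cost c S = (\<Sum>p\<in>S. c p)"

definition utility :: "('p \<Rightarrow> nat) \<Rightarrow> ('v \<Rightarrow> 'p set) \<Rightarrow> 'v \<Rightarrow> 'p set \<Rightarrow> nat" where
  "utility c A i S = cost c (S \<inter> A i)"

definition max_disutility ::
  "'v set \<Rightarrow> 'p set \<Rightarrow> ('p \<Rightarrow> nat) \<Rightarrow> nat \<Rightarrow> ('v \<Rightarrow> 'p set) \<Rightarrow> 'p set \<Rightarrow> real" where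
  "max_disutility N P c b A S = Max ((\<lambda>i. real b - real (utility c A i S)) ` N)"

definition OPT :: "'v set \<Rightarrow> 'p set \<Rightarrow> ('p \<Rightarrow> nat) \<Rightarrow> nat \<Rightarrow> ('v \<Rightarrow> 'p set) \<Rightarrow> real" where
  "OPT N P c b A = Min (max_disutility N P c b A ` {T. T \<subseteq> P \<and> cost c T \<le> b})"

definition lp_feasible ::
  "'v set \<Rightarrow> 'p set \<Rightarrow> ('p \<Rightarrow> nat) \<Rightarrow> nat \<Rightarrow> ('v \<Rightarrow> 'p set) \<Rightarrow> real \<Rightarrow> ('p \<Rightarrow> real) \<Rightarrow> bool" where
  "lp_feasible N P c b A q x \<longleftrightarrow>
     (\<forall>i\<in>N. q \<ge> real b - (\<Sum>p\<in>A i. real (c p) * x p)) \<and>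
     (\<Sum>p\<in>P. real (c p) * x p) \<le> real b \<and>
     (\<forall>p\<in>P. 0 \<le> x p \<and> x p \<le> 1) \<and> q \<ge> 0"

definition lp_optimal ::
  "'v set \<Rightarrow> 'p set \<Rightarrow> ('p \<Rightarrow> nat) \<Rightarrow> nat \<Rightarrow> ('v \<Rightarrow> 'p set) \<Rightarrow> real \<Rightarrow> ('p \<Rightarrow> real) \<Rightarrow> bool" where
  "lp_optimal N P c b A q x \<longleftrightarrow> lp_feasible N P c b A q x \<and>
     (\<forall>q' x'. lp_feasible N P c b A q' x' \<longrightarrow> q \<le> q')"

(* possible outputs of the minimax-disutility Ordered-Relax algorithm
   (ties in the order broken arbitrarily) *)
definition ordered_relax_outputs ::
  "'v set \<Rightarrow> 'p set \<Rightarrow> ('p \<Rightarrow> nat) \<Rightarrow> nat \<Rightarrow> ('v \<Rightarrow> 'p set) \<Rightarrow> 'p set set" where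
  "ordered_relax_outputs N P c b A =
     {set (ordered_fill c b xs) | xs q x. lp_optimal N P c b A q x \<and> xs \<in> orders_of P \<and>
        sorted_wrt (\<lambda>p p'. real (c p') * x p' \<le> real (c p) * x p) xs}"

end

theory Submission
  imports Defs
begin

text \<open>
  Let \<open>(q, x)\<close> be an optimal LP solution and \<open>y p = c p * x p\<close>; every integral feasible outcome
  gives a feasible LP point, so \<open>q \<le> OPT\<close>. Ordered-fill outputs a prefix of the order by \<open>y\<close>,
  so some threshold \<open>t\<close> separates the chosen projects (\<open>y \<ge> t\<close>) from the others (\<open>y \<le> t\<close>).
  Fix a voter with approval set \<open>A\<close> and let \<open>j = |A - S|\<close>. Since \<open>|A| < l_o \<le> |S|\<close>, at least
  \<open>j + 1\<close> chosen projects lie outside \<open>A\<close>; their total \<open>y\<close> is at least \<open>(j + 1) t\<close> and at most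
  \<open>b - y(A) \<le> q\<close>. The voter loses at most \<open>y(A - S) \<le> j t \<le> j q / (j + 1)\<close> of fractional
  utility, so the disutility is at most \<open>(2 - 1/(j + 1)) q \<le> (2 - 1/|S|) OPT\<close>, and \<open>|S| \<le> h_o\<close>.
\<close>

lemma ordered_fill_eq_take: "ordered_fill c r xs = take (length (ordered_fill c r xs)) xs"
  by (induction xs arbitrary: r) auto

lemma set_ordered_fill_subset: "set (ordered_fill c r xs) \<subseteq> set xs"
  by (metis ordered_fill_eq_take set_take_subset)

lemma finite_fill_cards:
  assumes "finite P"
  shows "finite (fill_cards P c b)"
proof (rule finite_subset)
  show "fill_cards P c b \<subseteq> {..card P}"
    using card_mono[OF finite_set set_ordered_fill_subset]
    by (auto simp: fill_cards_def orders_of_def)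
qed simp

lemma card_ordered_fill_between:
  assumes "finite P" and "xs \<in> orders_of P"
  shows "l_o P c b \<le> card (set (ordered_fill c b xs))"
    and "card (set (ordered_fill c b xs)) \<le> h_o P c b"
proof -
  have "card (set (ordered_fill c b xs)) \<in> fill_cards P c b"
    using assms(2) by (auto simp: fill_cards_def)
  then show "l_o P c b \<le> card (set (ordered_fill c b xs))"
    and "card (set (ordered_fill c b xs)) \<le> h_o P c b"
    using finite_fill_cards[OF assms(1)] by (auto simp: l_o_def h_o_def)
qed

lemma sorted_prefix_threshold:
  assumes "sorted_wrt (\<lambda>p p'. f p' \<le> f p) xs" and "\<forall>p\<in>set xs. (0::real) \<le> f p"
  obtains t where "0 \<le> t" and "\<forall>p\<in>set (take k xs). t \<le> f p"
    and "\<forall>p\<in>set xs - set (take k xs). f p \<le> t"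
proof (cases "k < length xs")
  case True
  have split: "xs = take k xs @ xs ! k # drop (Suc k) xs"
    using True by (simp add: Cons_nth_drop_Suc)
  have "sorted_wrt (\<lambda>p p'. f p' \<le> f p) (take k xs @ xs ! k # drop (Suc k) xs)"
    using assms(1) split by simp
  then have "\<forall>p\<in>set (take k xs). f (xs ! k) \<le> f p"
    and "\<forall>p\<in>set xs - set (take k xs). f p \<le> f (xs ! k)"
    by (auto simp: sorted_wrt_append, subst (asm) split, auto)
  moreover have "0 \<le> f (xs ! k)" using assms(2) True by simp
  ultimately show ?thesis using that by blast
next
  case False
  then show ?thesis using assms(2) by (intro that[of 0]) (simp_all add: not_less)
qed

lemma max_disutility_le_iff:
  assumes "finite N" and "N \<noteq> {}"
  shows "max_disutility N P c b A S \<le> r \<longleftrightarrow> (\<forall>i\<in>N. real b - real (utility c A i S) \<le> r)"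
  using assms by (simp add: max_disutility_def)

lemma lp_feasible_of_outcome:
  assumes "finite N" and "N \<noteq> {}" and "finite P" and "\<forall>i\<in>N. A i \<subseteq> P"
    and "T \<subseteq> P" and "cost c T \<le> b"
  shows "lp_feasible N P c b A (max_disutility N P c b A T) (\<lambda>p. of_bool (p \<in> T))"
proof -
  have value_utility: "(\<Sum>p\<in>A i. real (c p) * of_bool (p \<in> T)) = real (utility c A i T)"
    if "i \<in> N" for i
    using that assms(3,4) finite_subset
    by (fastforce simp: utility_def cost_def Int_commute Collect_mem_eq)
  have "utility c A i T \<le> b" for i
    using assms(3,5,6) finite_subset
    by (fastforce simp: utility_def cost_def intro: order_trans[OF sum_mono2])
  moreover have disutility_le: "\<forall>i\<in>N. real b - real (utility c A i T) \<le> max_disutility N P c b A T"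
    using max_disutility_le_iff[OF assms(1,2)] by blast
  ultimately have "0 \<le> max_disutility N P c b A T"
    using assms(2) by (metis all_not_in_conv diff_ge_0_iff_ge of_nat_le_iff order_trans)
  moreover have "(\<Sum>p\<in>P. real (c p) * of_bool (p \<in> T)) = real (cost c T)"
    using assms(3,5) by (simp add: cost_def Int_absorb1 Collect_mem_eq)
  ultimately show ?thesis
    using assms(6) value_utility disutility_le by (auto simp: lp_feasible_def)
qed

lemma lp_optimal_le_OPT:
  assumes "finite N" and "N \<noteq> {}" and "finite P" and "\<forall>i\<in>N. A i \<subseteq> P"
    and "lp_optimal N P c b A q x"
  shows "q \<le> OPT N P c b A"
proof -
  let ?F = "{T. T \<subseteq> P \<and> cost c T \<le> b}"
  have "{} \<in> ?F" by (simp add: cost_def)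
  then have "OPT N P c b A \<in> max_disutility N P c b A ` ?F"
    unfolding OPT_def using assms(3) by (intro Min_in) auto
  then obtain T where "T \<subseteq> P" "cost c T \<le> b" "OPT N P c b A = max_disutility N P c b A T"
    by auto
  then show ?thesis
    using assms lp_feasible_of_outcome unfolding lp_optimal_def by metis
qed

lemma threshold_loss_bound:
  fixes y :: "'p \<Rightarrow> real"
  assumes "finite P" and "A \<subseteq> P" and "S \<subseteq> P" and "card A < card S"
    and "\<forall>p\<in>P. 0 \<le> y p" and "sum y P \<le> b" and "b - sum y A \<le> q"
    and "0 \<le> t" and "\<forall>p\<in>S. t \<le> y p" and "\<forall>p\<in>P - S. y p \<le> t"
  shows "b - sum y (A \<inter> S) \<le> (2 - 1 / card S) * q"
proof -
  define j where "j = card (A - S)"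
  have "finite A" and "finite S" using assms(1-3) finite_subset by auto
  then have j_less: "j + 1 \<le> card (S - A)"
    using assms(4) card_Int_Diff[of A S] card_Int_Diff[of S A] by (simp add: j_def Int_commute)
  have "sum y (S - A) + sum y A \<le> sum y P"
    using assms(1-3,5) \<open>finite A\<close> \<open>finite S\<close>
    by (subst sum.union_disjoint[symmetric]) (auto intro: sum_mono2)
  then have "sum y (S - A) \<le> q" using assms(6,7) by linarith
  moreover have "(j + 1) * t \<le> sum y (S - A)"
  proof -
    have "(j + 1) * t \<le> card (S - A) * t"
      using j_less assms(8) by (intro mult_right_mono) auto
    also have "\<dots> \<le> sum y (S - A)" using assms(9) by (intro sum_bounded_below) auto
    finally show ?thesis .
  qed
  ultimately have "j * ((j + 1) * t) \<le> j * q" by (intro mult_left_mono) auto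
  then have "j * t \<le> (1 - 1 / (j + 1)) * q" by (simp add: field_simps)
  moreover have "sum y (A - S) \<le> j * t"
    unfolding j_def using assms(2,10) by (intro sum_bounded_above) auto
  moreover have "sum y A = sum y (A \<inter> S) + sum y (A - S)"
    using \<open>finite A\<close> by (rule sum.Int_Diff)
  ultimately have "b - sum y (A \<inter> S) \<le> (2 - 1 / (j + 1)) * q"
    using assms(7) by (simp add: algebra_simps)
  also have "\<dots> \<le> (2 - 1 / card S) * q"
  proof (rule mult_right_mono)
    show "0 \<le> q"
      using assms(6,7) sum_mono2[OF assms(1,2)] assms(5) by force
    show "2 - 1 / real (j + 1) \<le> 2 - 1 / real (card S)"
      using j_less card_mono[OF \<open>finite S\<close>, of "S - A"] by (simp add: frac_le)
  qed
  finally show ?thesis .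
qed

lemma ordered_relax_output_threshold:
  assumes "S \<in> ordered_relax_outputs N P c b A"
  obtains q x xs t where "lp_optimal N P c b A q x" and "xs \<in> orders_of P"
    and "S = set (ordered_fill c b xs)" and "0 \<le> t"
    and "\<forall>p\<in>S. t \<le> real (c p) * x p" and "\<forall>p\<in>P - S. real (c p) * x p \<le> t"
proof -
  obtain xs q x where S: "S = set (ordered_fill c b xs)" and opt: "lp_optimal N P c b A q x"
    and xs: "xs \<in> orders_of P"
    and sorted: "sorted_wrt (\<lambda>p p'. real (c p') * x p' \<le> real (c p) * x p) xs"
    using assms unfolding ordered_relax_outputs_def by blast
  have P: "set xs = P" using xs by (simp add: orders_of_def)
  have S_take: "S = set (take (length (ordered_fill c b xs)) xs)"
    using S ordered_fill_eq_take by metis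
  have "\<forall>p\<in>set xs. 0 \<le> real (c p) * x p"
    using opt P by (simp add: lp_optimal_def lp_feasible_def)
  then obtain t where "0 \<le> t" "\<forall>p\<in>S. t \<le> real (c p) * x p" "\<forall>p\<in>P - S. real (c p) * x p \<le> t"
    using sorted_prefix_threshold[OF sorted, of "length (ordered_fill c b xs)"]
    unfolding S_take[symmetric] P by blast
  then show ?thesis using that opt xs S by blast
qed

lemma voter_disutility_le_threshold_bound:
  assumes "lp_feasible N P c b A q x" and "finite P" and "i \<in> N" and "A i \<subseteq> P"
    and "S \<subseteq> P" and "card (A i) < card S" and "0 \<le> t"
    and "\<forall>p\<in>S. t \<le> real (c p) * x p" and "\<forall>p\<in>P - S. real (c p) * x p \<le> t"
  shows "real b - real (utility c A i S) \<le> (2 - 1 / card S) * q"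
proof -
  define y where "y p = real (c p) * x p" for p
  have x: "\<forall>p\<in>P. 0 \<le> x p \<and> x p \<le> 1" using assms(1) by (simp add: lp_feasible_def)
  have "sum y (A i \<inter> S) \<le> (\<Sum>p\<in>A i \<inter> S. real (c p))"
    using x assms(5) by (intro sum_mono) (auto simp: y_def mult_left_le)
  also have "\<dots> = utility c A i S" by (simp add: utility_def cost_def Int_commute)
  finally have "sum y (A i \<inter> S) \<le> utility c A i S" .
  moreover have "b - sum y (A i \<inter> S) \<le> (2 - 1 / card S) * q"
    using threshold_loss_bound[OF assms(2,4,5,6)] assms(1,3,7-9) x
    by (simp add: y_def lp_feasible_def)
  ultimately show ?thesis by linarith
qed

theorem theorem8:
  fixes N :: "'v set" and P :: "'p set" and c :: "'p \<Rightarrow> nat" and b :: nat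
    and A :: "'v \<Rightarrow> 'p set" and S :: "'p set"
  assumes "finite N" and "N \<noteq> {}" and "finite P"
    and "\<forall>i\<in>N. A i \<subseteq> P"
    and "l_o P c b > h_A N A"
    and "S \<in> ordered_relax_outputs N P c b A"
  shows "max_disutility N P c b A S \<le> (2 - 1 / real (h_o P c b)) * OPT N P c b A"
proof -
  obtain q x xs t where opt: "lp_optimal N P c b A q x" and xs: "xs \<in> orders_of P"
    and S: "S = set (ordered_fill c b xs)" and t: "0 \<le> t" "\<forall>p\<in>S. t \<le> real (c p) * x p"
    "\<forall>p\<in>P - S. real (c p) * x p \<le> t"
    using ordered_relax_output_threshold[OF assms(6)] by blast
  have "S \<subseteq> P" using S xs set_ordered_fill_subset by (fastforce simp: orders_of_def)
  have card_S: "h_A N A < card S" "card S \<le> h_o P c b"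
    using card_ordered_fill_between[OF assms(3) xs, of c b] S assms(5) by auto
  have feasible: "lp_feasible N P c b A q x" using opt by (simp add: lp_optimal_def)
  have q: "0 \<le> q" "q \<le> OPT N P c b A"
    using feasible lp_optimal_le_OPT[OF assms(1-4) opt] by (auto simp: lp_feasible_def)
  have factor: "(2 - 1 / card S) * q \<le> (2 - 1 / h_o P c b) * OPT N P c b A"
    using card_S q by (intro mult_mono) (auto simp: frac_le divide_le_eq)
  have "real b - real (utility c A i S) \<le> (2 - 1 / card S) * q" if "i \<in> N" for i
  proof (rule voter_disutility_le_threshold_bound[OF feasible assms(3) that _ \<open>S \<subseteq> P\<close> _ t])
    show "A i \<subseteq> P" using assms(4) that by blast
    show "card (A i) < card S"
      using card_S(1) assms(1,2) that by (simp add: h_A_def Max_less_iff)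
  qed
  then show ?thesis using factor max_disutility_le_iff[OF assms(1,2)] by force
qed

end
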